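(* Let $\varphi\colon\mathcal{M}\to\mathcal{X}$ be a smooth lift of the form $\varphi(\lambda,Y_1,\dots,Y_d)=\sum_{i=1}^r\lambda_i\,(Y_1)_{:,i}\otimes\cdots\otimes(Y_d)_{:,i}$, where $\mathcal{M}$ is a smooth embedded submanifold of $\mathbb{R}^r\times\mathbb{R}^{n_1\times r}\times\cdots\times\mathbb{R}^{n_d\times r}$. Let $(\lambda,Y_1,\dots,Y_d)\in\mathcal{M}$ and $X=\varphi(\lambda,Y_1,\dots,Y_d)$, and suppose $\mathrm{col}(Y_1)^\perp\otimes\cdots\otimes\mathrm{col}(Y_d)^\perp\not\subseteq(\mathrm{T}_X\mathcal{X})^*$. If $d\ge3$, then $\varphi$ does not satisfy "2 $\Rightarrow$ 1" at $(\lambda,Y_1,\dots,Y_d)$. If $d=2$ and $\lambda=0$, then $\varphi$ does not satisfy "2 $\Rightarrow$ 1" at $(0,Y_1,Y_2)$.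
   Context: $(Y)_{:,i}$ is the $i$-th column of $Y$; $\otimes$ is the tensor (outer) product, with values in $\mathbb{R}^{n_1\times\cdots\times n_d}$ equipped with the standard inner product; $\mathrm{col}(Y_j)^\perp\subseteq\mathbb{R}^{n_j}$ is the orthogonal complement of the column space, and $\mathrm{col}(Y_1)^\perp\otimes\cdots\otimes\mathrm{col}(Y_d)^\perp$ is the linear span of the tensors $u_1\otimes\cdots\otimes u_d$ with $u_j\in\mathrm{col}(Y_j)^\perp$. $\mathcal{X}=\varphi(\mathcal{M})$. Tangent cone $\mathrm{T}_X\mathcal{X}=\{\lim(X_i-X)/\tau_i: X_i\in\mathcal{X},\tau_i>0,\tau_i\to0\}$; $K^*=\{U:\langle U,V\rangle\ge0\ \forall V\in K\}$. For $g=f\circ\varphi$, $y$ is 2-critical if $(g\circ c)'(0)=0$ and $(g\circ c)''(0)\ge0$ for all smooth curves $c$ in $\mathcal{M}$ with $c(0)=y$. "2 $\Rightarrow$ 1" at $y$: for every twice differentiable $f$ on $\mathbb{R}^{n_1\times\cdots\times n_d}$, if $y$ is 2-critical for $f\circ\varphi$ then $\varphi(y)$ is stationary, i.e., $\nabla f(\varphi(y))\in(\mathrm{T}_{\varphi(y)}\mathcal{X})^*$. *)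

theory Defs
  imports "HOL-Analysis.Analysis"
begin

text \<open>Since the number of factors d, the sizes n_1..n_d and the rank r vary inside the statement,
  all Euclidean spaces involved (R^r, R^(n_j x r), R^(n_1 x ... x n_d), R^k) are realised as
  coordinate subspaces of the inner product space of finitely supported real functions on a
  fixed index type, with the standard (l2) inner product.\<close>

typedef 'a fsupp = "{f :: 'a \<Rightarrow> real. finite {x. f x \<noteq> 0}}"
  morphisms fs Abs_fsupp
  by (rule exI[of _ "\<lambda>_. 0"]) simp

setup_lifting type_definition_fsupp

definition supp_fs :: "'a fsupp \<Rightarrow> 'a set" where
  "supp_fs u = {x. fs u x \<noteq> 0}"

lemma finite_supp_fs [simp]: "finite (supp_fs u)"
  using fs[of u] by (simp add: supp_fs_def)

lemma fs_eqI: "(\<And>x. fs u x = fs v x) \<Longrightarrow> u = v"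
  by (metis fs_inverse ext)

instantiation fsupp :: (type) real_vector
begin
lift_definition zero_fsupp :: "'a fsupp" is "\<lambda>_. 0" by simp
lift_definition plus_fsupp :: "'a fsupp \<Rightarrow> 'a fsupp \<Rightarrow> 'a fsupp" is "\<lambda>f g x. f x + g x"
proof -
  fix f g :: "'a \<Rightarrow> real" assume "finite {x. f x \<noteq> 0}" "finite {x. g x \<noteq> 0}"
  then have "finite ({x. f x \<noteq> 0} \<union> {x. g x \<noteq> 0})" by simp
  then show "finite {x. f x + g x \<noteq> 0}" by (rule rev_finite_subset) auto
qed
lift_definition uminus_fsupp :: "'a fsupp \<Rightarrow> 'a fsupp" is "\<lambda>f x. - f x" by simp
lift_definition minus_fsupp :: "'a fsupp \<Rightarrow> 'a fsupp \<Rightarrow> 'a fsupp" is "\<lambda>f g x. f x - g x"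
proof -
  fix f g :: "'a \<Rightarrow> real" assume "finite {x. f x \<noteq> 0}" "finite {x. g x \<noteq> 0}"
  then have "finite ({x. f x \<noteq> 0} \<union> {x. g x \<noteq> 0})" by simp
  then show "finite {x. f x - g x \<noteq> 0}" by (rule rev_finite_subset) auto
qed
lift_definition scaleR_fsupp :: "real \<Rightarrow> 'a fsupp \<Rightarrow> 'a fsupp" is "\<lambda>c f x. c * f x"
proof -
  fix c and f :: "'a \<Rightarrow> real" assume "finite {x. f x \<noteq> 0}"
  then show "finite {x. c * f x \<noteq> 0}" by (rule rev_finite_subset) auto
qed
instance
  by standard (transfer; auto simp: algebra_simps)+
end

instantiation fsupp :: (type) real_inner
begin
definition inner_fsupp :: "'a fsupp \<Rightarrow> 'a fsupp \<Rightarrow> real" where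
  "inner_fsupp u v = (\<Sum>x\<in>supp_fs u. fs u x * fs v x)"
definition norm_fsupp :: "'a fsupp \<Rightarrow> real" where
  "norm_fsupp u = sqrt (inner u u)"
definition dist_fsupp :: "'a fsupp \<Rightarrow> 'a fsupp \<Rightarrow> real" where
  "dist_fsupp u v = norm (u - v)"
definition sgn_fsupp :: "'a fsupp \<Rightarrow> 'a fsupp" where
  "sgn_fsupp u = u /\<^sub>R norm u"
definition uniformity_fsupp :: "('a fsupp \<times> 'a fsupp) filter" where
  "uniformity_fsupp = (INF e\<in>{0<..}. principal {(x, y). dist x y < e})"
definition open_fsupp :: "'a fsupp set \<Rightarrow> bool" where
  "open_fsupp U = (\<forall>x\<in>U. \<forall>\<^sub>F (x', y) in uniformity. x' = x \<longrightarrow> y \<in> U)"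

lemma inner_fsupp_sup:
  assumes "finite A" "supp_fs u \<subseteq> A"
  shows "inner u v = (\<Sum>x\<in>A. fs u x * fs v x)"
  unfolding inner_fsupp_def
  by (rule sum.mono_neutral_left) (use assms in \<open>auto simp: supp_fs_def\<close>)

instance
proof
  fix x y z :: "'a fsupp" and r :: real
  let ?A = "supp_fs x \<union> supp_fs y \<union> supp_fs z"
  have fA: "finite ?A" by simp
  have sx: "supp_fs x \<subseteq> ?A" and sy: "supp_fs y \<subseteq> ?A" and sz: "supp_fs z \<subseteq> ?A" by auto
  show "inner x y = inner y x"
    using inner_fsupp_sup[OF fA sx, of y] inner_fsupp_sup[OF fA sy, of x]
    by (simp add: mult.commute)
  have sxy: "supp_fs (x + y) \<subseteq> ?A" by (auto simp: supp_fs_def plus_fsupp.rep_eq)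
  show "inner (x + y) z = inner x z + inner y z"
    using inner_fsupp_sup[OF fA sxy, of z] inner_fsupp_sup[OF fA sx, of z] inner_fsupp_sup[OF fA sy, of z]
    by (simp add: plus_fsupp.rep_eq distrib_right sum.distrib)
  have srx: "supp_fs (r *\<^sub>R x) \<subseteq> ?A" by (auto simp: supp_fs_def scaleR_fsupp.rep_eq)
  show "inner (r *\<^sub>R x) y = r * inner x y"
    using inner_fsupp_sup[OF fA srx, of y] inner_fsupp_sup[OF fA sx, of y]
    by (simp add: scaleR_fsupp.rep_eq sum_distrib_left mult.assoc)
  show "0 \<le> inner x x" unfolding inner_fsupp_def by (intro sum_nonneg) simp
  show "inner x x = 0 \<longleftrightarrow> x = 0"
  proof
    assume h: "inner x x = 0"
    have "\<forall>i\<in>supp_fs x. fs x i * fs x i = 0"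
      using h unfolding inner_fsupp_def by (subst (asm) sum_nonneg_eq_0_iff) auto
    then have "supp_fs x = {}" by (auto simp: supp_fs_def)
    then show "x = 0" by (intro fs_eqI) (auto simp: supp_fs_def zero_fsupp.rep_eq)
  next
    assume "x = 0" then show "inner x x = 0"
      by (simp add: inner_fsupp_def supp_fs_def zero_fsupp.rep_eq)
  qed
  show "norm x = sqrt (inner x x)" by (simp add: norm_fsupp_def)
qed (simp_all add: dist_fsupp_def sgn_fsupp_def uniformity_fsupp_def open_fsupp_def)
end


definition Rn :: "nat \<Rightarrow> nat fsupp set" where
  "Rn m = {u. supp_fs u \<subseteq> {..<m}}"

text \<open>A point (lambda, Y_1, ..., Y_d) of R^r x R^(n_1 x r) x ... x R^(n_d x r) is a pair (l, Y) with
  fs l i = lambda_(i+1) and fs Y (j, a, i) = (Y_(j+1))_(a+1, i+1) (0-based indices).\<close>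
type_synonym param = "nat fsupp \<times> (nat \<times> nat \<times> nat) fsupp"
type_synonym tensor = "nat list fsupp"

definition param_space :: "nat \<Rightarrow> nat \<Rightarrow> (nat \<Rightarrow> nat) \<Rightarrow> param set" where
  "param_space d r n = {(l, Y). supp_fs l \<subseteq> {..<r} \<and>
      supp_fs Y \<subseteq> {(j, a, i). j < d \<and> a < n j \<and> i < r}}"

definition multi_idx :: "nat \<Rightarrow> (nat \<Rightarrow> nat) \<Rightarrow> nat list set" where
  "multi_idx d n = {is. length is = d \<and> (\<forall>j<d. is ! j < n j)}"

lemma finite_multi_idx [simp]: "finite (multi_idx d n)"
proof -
  have "multi_idx d n \<subseteq> {xs. set xs \<subseteq> {..<(\<Sum>j<d. n j)} \<and> length xs = d}"
  proof
    fix xs assume xs: "xs \<in> multi_idx d n"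
    have "set xs \<subseteq> {..<(\<Sum>j<d. n j)}"
    proof
      fix x assume "x \<in> set xs"
      then obtain j where j: "j < d" "x = xs ! j" using xs by (auto simp: multi_idx_def in_set_conv_nth)
      then have "x < n j" using xs by (auto simp: multi_idx_def)
      also have "n j \<le> (\<Sum>j<d. n j)" using j by (intro member_le_sum) auto
      finally show "x \<in> {..<(\<Sum>j<d. n j)}" by simp
    qed
    then show "xs \<in> {xs. set xs \<subseteq> {..<(\<Sum>j<d. n j)} \<and> length xs = d}"
      using xs by (simp add: multi_idx_def)
  qed
  moreover have "finite {xs. set xs \<subseteq> {..<(\<Sum>j<d. n j)} \<and> length xs = d}"
    by (rule finite_lists_length_eq) simp
  ultimately show ?thesis by (rule finite_subset)
qed

definition tensor_space :: "nat \<Rightarrow> (nat \<Rightarrow> nat) \<Rightarrow> tensor set" where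
  "tensor_space d n = {X. supp_fs X \<subseteq> multi_idx d n}"

lift_definition mk_tensor :: "nat \<Rightarrow> (nat \<Rightarrow> nat) \<Rightarrow> (nat list \<Rightarrow> real) \<Rightarrow> tensor"
  is "\<lambda>d n F is. if is \<in> multi_idx d n then F is else 0"
proof -
  fix d n and F :: "nat list \<Rightarrow> real"
  show "finite {is. (if is \<in> multi_idx d n then F is else 0) \<noteq> 0}"
    by (rule finite_subset[OF _ finite_multi_idx[of d n]]) auto
qed

definition lift_phi :: "nat \<Rightarrow> nat \<Rightarrow> (nat \<Rightarrow> nat) \<Rightarrow> param \<Rightarrow> tensor" where
  "lift_phi d r n = (\<lambda>(l, Y). mk_tensor d n
      (\<lambda>is. \<Sum>i<r. fs l i * (\<Prod>j<d. fs Y (j, is ! j, i))))"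

definition outer :: "nat \<Rightarrow> (nat \<Rightarrow> nat) \<Rightarrow> (nat \<Rightarrow> nat fsupp) \<Rightarrow> tensor" where
  "outer d n u = mk_tensor d n (\<lambda>is. \<Prod>j<d. fs (u j) (is ! j))"

lift_definition column :: "(nat \<times> nat \<times> nat) fsupp \<Rightarrow> nat \<Rightarrow> nat \<Rightarrow> nat fsupp"
  is "\<lambda>Y j i a. Y (j, a, i)"
proof -
  fix Y :: "nat \<times> nat \<times> nat \<Rightarrow> real" and j i :: nat
  assume "finite {x. Y x \<noteq> 0}"
  then have "finite ((\<lambda>a. (j, a, i)) -` {x. Y x \<noteq> 0})"
    by (rule finite_vimageI) (auto simp: inj_on_def)
  then show "finite {a. Y (j, a, i) \<noteq> 0}" by (simp add: vimage_def)
qed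

definition col_space :: "nat \<Rightarrow> (nat \<times> nat \<times> nat) fsupp \<Rightarrow> nat \<Rightarrow> nat fsupp set" where
  "col_space r Y j = span {column Y j i | i. i < r}"

definition orth_compl :: "'a::real_inner set \<Rightarrow> 'a set \<Rightarrow> 'a set" where
  "orth_compl W S = {u \<in> W. \<forall>s\<in>S. inner u s = 0}"

definition tensor_of_complements ::
    "nat \<Rightarrow> nat \<Rightarrow> (nat \<Rightarrow> nat) \<Rightarrow> (nat \<times> nat \<times> nat) fsupp \<Rightarrow> tensor set" where
  "tensor_of_complements d r n Y =
     span {outer d n u | u. \<forall>j<d. u j \<in> orth_compl (Rn (n j)) (col_space r Y j)}"

definition tangent_cone :: "'a::real_normed_vector set \<Rightarrow> 'a \<Rightarrow> 'a set" where
  "tangent_cone A x = {v. \<exists>xs \<tau>. (\<forall>i. xs i \<in> A \<and> \<tau> i > 0) \<and> \<tau> \<longlonglongrightarrow> 0 \<and>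
       (\<lambda>i. (xs i - x) /\<^sub>R \<tau> i) \<longlonglongrightarrow> v}"

definition dual_cone :: "'a::real_inner set \<Rightarrow> 'a set \<Rightarrow> 'a set" where
  "dual_cone W K = {u \<in> W. \<forall>v\<in>K. inner u v \<ge> 0}"

text \<open>C^infinity on S: all iterated (Frechet) derivatives exist; D vs x is the iterated
  derivative at x applied to the directions in vs.  (On finite-dimensional spaces this is
  equivalent to the usual notion.)\<close>
definition smooth_on :: "'a::real_normed_vector set \<Rightarrow> ('a \<Rightarrow> 'b::real_normed_vector) \<Rightarrow> bool" where
  "smooth_on S f \<longleftrightarrow> (\<exists>D :: 'a list \<Rightarrow> 'a \<Rightarrow> 'b. (\<forall>x\<in>S. D [] x = f x) \<and>
      (\<forall>vs. \<forall>x\<in>S. (D vs has_derivative (\<lambda>v. D (v # vs) x)) (at x within S)))"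

definition twice_differentiable_on :: "'a::real_normed_vector set \<Rightarrow> ('a \<Rightarrow> real) \<Rightarrow> bool" where
  "twice_differentiable_on S f \<longleftrightarrow> (\<exists>f' f''. \<forall>x\<in>S. (f has_derivative f' x) (at x within S) \<and>
      (\<forall>v. ((\<lambda>y. f' y v) has_derivative f'' x v) (at x within S)))"

text \<open>Smooth embedded submanifold of the linear space E (local defining functions h: U -> R^k,
  of constant codimension k, with M \<inter> U = h^-1(0) and Dh(p) of rank k).\<close>
definition embedded_submanifold :: "'a::real_normed_vector set \<Rightarrow> 'a set \<Rightarrow> bool" where
  "embedded_submanifold E M \<longleftrightarrow> M \<subseteq> E \<and> (\<exists>k. \<forall>p\<in>M. \<exists>U (h :: 'a \<Rightarrow> nat fsupp) h'.
      open U \<and> p \<in> U \<and> smooth_on (U \<inter> E) h \<and> (\<forall>y\<in>U \<inter> E. h y \<in> Rn k) \<and>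
      (\<forall>y\<in>U \<inter> E. h y = 0 \<longleftrightarrow> y \<in> M) \<and>
      (h has_derivative h') (at p within U \<inter> E) \<and> h' ` E = Rn k)"

definition smooth_curve_in :: "'a::real_normed_vector set \<Rightarrow> (real \<Rightarrow> 'a) \<Rightarrow> bool" where
  "smooth_curve_in M c \<longleftrightarrow> (\<exists>\<epsilon>>0. smooth_on {-\<epsilon><..<\<epsilon>} c \<and> c ` {-\<epsilon><..<\<epsilon>} \<subseteq> M)"

definition two_critical :: "'a::real_normed_vector set \<Rightarrow> ('a \<Rightarrow> real) \<Rightarrow> 'a \<Rightarrow> bool" where
  "two_critical M g y \<longleftrightarrow> (\<forall>c. smooth_curve_in M c \<and> c 0 = y \<longrightarrow>
      deriv (g \<circ> c) 0 = 0 \<and> deriv (deriv (g \<circ> c)) 0 \<ge> 0)"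

definition stationary_point :: "'a::real_inner set \<Rightarrow> 'a set \<Rightarrow> ('a \<Rightarrow> real) \<Rightarrow> 'a \<Rightarrow> bool" where
  "stationary_point W A f x \<longleftrightarrow> (\<exists>g\<in>W. (f has_derivative inner g) (at x within W) \<and>
      g \<in> dual_cone W (tangent_cone A x))"

definition two_implies_one ::
    "'a::real_normed_vector set \<Rightarrow> ('a \<Rightarrow> 'b::real_inner) \<Rightarrow> 'b set \<Rightarrow> 'a \<Rightarrow> bool" where
  "two_implies_one M \<phi> W y \<longleftrightarrow> (\<forall>f. twice_differentiable_on W f \<longrightarrow>
      two_critical M (f \<circ> \<phi>) y \<longrightarrow> stationary_point W (\<phi> ` M) f (\<phi> y))"

end

theory Submission
  imports Defs
begin

(* Pick an elementary tensor U = u_1 (x) ... (x) u_d with u_j orthogonal to col(Y_j) that is not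
  in the dual of the tangent cone; one exists because these tensors form a set closed under
  negation, so if all of them were in the dual cone they, and hence their span, would be orthogonal
  to the tangent cone.  Take f = <U, .>.  Along a curve c(t) = (lambda(t), Y_1(t), ..., Y_d(t)) in M
  through the point, f(phi(c(t))) = sum_i lambda_i(t) prod_j <u_j, (Y_j(t))_(:,i)>, and every
  factor <u_j, (Y_j(t))_(:,i)> vanishes at t = 0.  If d >= 3, or d = 2 and lambda = 0, each summand
  is a product of at least three functions vanishing at 0, so the first two derivatives of f o phi o c
  vanish at 0 and the point is 2-critical.  But the gradient of f is U itself, so phi(lambda, Y) is
  not stationary.  The argument never uses that M is a submanifold or that it contains the point. *)

lemma fs_zero [simp]: "fs 0 x = 0"
  by (simp add: zero_fsupp.rep_eq)

lemma fs_plus [simp]: "fs (u + v) x = fs u x + fs v x"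
  by (simp add: plus_fsupp.rep_eq)

lemma fs_uminus [simp]: "fs (- u) x = - fs u x"
  by (simp add: uminus_fsupp.rep_eq)

lemma fs_scaleR [simp]: "fs (c *\<^sub>R u) x = c * fs u x"
  by (simp add: scaleR_fsupp.rep_eq)

lemma fs_sum: "fs (\<Sum>a\<in>A. f a) x = (\<Sum>a\<in>A. fs (f a) x)"
  by (induction A rule: infinite_finite_induct) simp_all

lemma abs_fs_le_norm: "\<bar>fs u x\<bar> \<le> norm u"
proof -
  have "(fs u x)\<^sup>2 \<le> inner u u"
  proof (cases "x \<in> supp_fs u")
    case True
    then show ?thesis unfolding inner_fsupp_def
      by (subst sum.remove[OF finite_supp_fs True]) (auto simp: power2_eq_square intro!: sum_nonneg)
  qed (simp add: supp_fs_def)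
  then show ?thesis by (simp add: norm_fsupp_def real_le_rsqrt)
qed

lemma bounded_linear_sum_fs:
  assumes "finite A"
  shows "bounded_linear (\<lambda>u. \<Sum>k\<in>A. w k * fs u (\<sigma> k))"
proof (rule bounded_linear_intro[where K = "\<Sum>k\<in>A. \<bar>w k\<bar>"])
  fix u
  have "\<bar>\<Sum>k\<in>A. w k * fs u (\<sigma> k)\<bar> \<le> (\<Sum>k\<in>A. \<bar>w k\<bar> * norm u)"
    by (rule order_trans[OF sum_abs sum_mono]) (simp add: abs_mult mult_left_mono abs_fs_le_norm)
  then show "norm (\<Sum>k\<in>A. w k * fs u (\<sigma> k)) \<le> norm u * (\<Sum>k\<in>A. \<bar>w k\<bar>)"
    by (simp add: sum_distrib_left mult.commute)
qed (simp_all add: sum.distrib sum_distrib_left algebra_simps)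

lemma bounded_linear_fs: "bounded_linear (\<lambda>u. fs u x)"
  using bounded_linear_sum_fs[of "{x}" "\<lambda>_. 1" "\<lambda>_. x"] by simp

lemma bounded_linear_inner_column: "bounded_linear (\<lambda>Y. inner v (column Y j i))"
proof -
  have "inner v (column Y j i) = (\<Sum>a\<in>supp_fs v. fs v a * fs Y (j, a, i))" for Y
    by (simp add: inner_fsupp_def column.rep_eq)
  then show ?thesis
    using bounded_linear_sum_fs[OF finite_supp_fs, of "fs v" "\<lambda>a. (j, a, i)" v] by simp
qed

lemma subspace_supp_fs_subset: "subspace {u. supp_fs u \<subseteq> A}"
  unfolding subspace_def supp_fs_def by (auto simp: subset_iff) (metis add.right_neutral)

lemma subspace_Rn: "subspace (Rn m)"
  unfolding Rn_def by (rule subspace_supp_fs_subset)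

lemma subspace_tensor_space: "subspace (tensor_space d n)"
  unfolding tensor_space_def by (rule subspace_supp_fs_subset)

(* Only f, f' and f'' are tracked, so all orders m >= 3 mean the same: the 2-jet of f at 0
  vanishes. *)
definition vanishes_to_order :: "real \<Rightarrow> nat \<Rightarrow> (real \<Rightarrow> real) \<Rightarrow> bool" where
  "vanishes_to_order e m f \<longleftrightarrow> (\<exists>f' f''.
      (\<forall>t\<in>{-e<..<e}. (f has_real_derivative f' t) (at t) \<and> (f' has_real_derivative f'' t) (at t)) \<and>
      (0 < m \<longrightarrow> f 0 = 0) \<and> (1 < m \<longrightarrow> f' 0 = 0) \<and> (2 < m \<longrightarrow> f'' 0 = 0))"

lemma vanishes_to_order_zero: "vanishes_to_order e m (\<lambda>t. 0)"
  unfolding vanishes_to_order_def by (rule exI[of _ "\<lambda>t. 0"], rule exI[of _ "\<lambda>t. 0"]) simp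

lemma vanishes_to_order_const: "vanishes_to_order e 0 (\<lambda>t. c)"
  unfolding vanishes_to_order_def by (rule exI[of _ "\<lambda>t. 0"], rule exI[of _ "\<lambda>t. 0"]) simp

lemma vanishes_to_order_mono:
  assumes "vanishes_to_order e m f" "k \<le> m"
  shows "vanishes_to_order e k f"
  using assms unfolding vanishes_to_order_def by fastforce

lemma vanishes_to_order_add:
  assumes "vanishes_to_order e m f" "vanishes_to_order e m g"
  shows "vanishes_to_order e m (\<lambda>t. f t + g t)"
proof -
  obtain f' f'' where f: "\<forall>t\<in>{-e<..<e}. (f has_real_derivative f' t) (at t) \<and> (f' has_real_derivative f'' t) (at t)"
    and f0: "0 < m \<longrightarrow> f 0 = 0" "1 < m \<longrightarrow> f' 0 = 0" "2 < m \<longrightarrow> f'' 0 = 0"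
    using assms(1) unfolding vanishes_to_order_def by blast
  obtain g' g'' where g: "\<forall>t\<in>{-e<..<e}. (g has_real_derivative g' t) (at t) \<and> (g' has_real_derivative g'' t) (at t)"
    and g0: "0 < m \<longrightarrow> g 0 = 0" "1 < m \<longrightarrow> g' 0 = 0" "2 < m \<longrightarrow> g'' 0 = 0"
    using assms(2) unfolding vanishes_to_order_def by blast
  show ?thesis
    unfolding vanishes_to_order_def
    by (rule exI[of _ "\<lambda>t. f' t + g' t"], rule exI[of _ "\<lambda>t. f'' t + g'' t"])
       (use f g f0 g0 in \<open>auto intro: DERIV_add\<close>)
qed

(* Leibniz rule: each term f^(i) g^(k-i) of (f g)^(k) with k < m + l has i < m or k - i < l. *)
lemma vanishes_to_order_mult:
  assumes "vanishes_to_order e m f" "vanishes_to_order e l g"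
  shows "vanishes_to_order e (m + l) (\<lambda>t. f t * g t)"
proof -
  obtain f' f'' where f: "\<forall>t\<in>{-e<..<e}. (f has_real_derivative f' t) (at t) \<and> (f' has_real_derivative f'' t) (at t)"
    and f0: "0 < m \<longrightarrow> f 0 = 0" "1 < m \<longrightarrow> f' 0 = 0" "2 < m \<longrightarrow> f'' 0 = 0"
    using assms(1) unfolding vanishes_to_order_def by blast
  obtain g' g'' where g: "\<forall>t\<in>{-e<..<e}. (g has_real_derivative g' t) (at t) \<and> (g' has_real_derivative g'' t) (at t)"
    and g0: "0 < l \<longrightarrow> g 0 = 0" "1 < l \<longrightarrow> g' 0 = 0" "2 < l \<longrightarrow> g'' 0 = 0"
    using assms(2) unfolding vanishes_to_order_def by blast
  have deriv: "((\<lambda>t. f t * g t) has_real_derivative f' t * g t + f t * g' t) (at t)"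
    "((\<lambda>t. f' t * g t + f t * g' t) has_real_derivative f'' t * g t + 2 * f' t * g' t + f t * g'' t) (at t)"
    if "t \<in> {-e<..<e}" for t
    using f g that by (auto intro!: derivative_eq_intros)
  have Leibniz: "0 < m + l \<longrightarrow> f 0 * g 0 = 0"
    "1 < m + l \<longrightarrow> f' 0 * g 0 + f 0 * g' 0 = 0"
    "2 < m + l \<longrightarrow> f'' 0 * g 0 + 2 * f' 0 * g' 0 + f 0 * g'' 0 = 0"
    using f0 g0 by (auto simp: not_less)
  show ?thesis
    unfolding vanishes_to_order_def
    by (rule exI[of _ "\<lambda>t. f' t * g t + f t * g' t"],
        rule exI[of _ "\<lambda>t. f'' t * g t + 2 * f' t * g' t + f t * g'' t"]) (use deriv Leibniz in auto)
qed

lemma vanishes_to_order_sum: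
  assumes "\<And>i. i \<in> A \<Longrightarrow> vanishes_to_order e m (f i)"
  shows "vanishes_to_order e m (\<lambda>t. \<Sum>i\<in>A. f i t)"
  using assms
proof (induction A rule: infinite_finite_induct)
  case (insert x F)
  then show ?case
    by (simp add: vanishes_to_order_add)
qed (simp_all add: vanishes_to_order_zero)

lemma vanishes_to_order_prod:
  assumes "\<And>i. i \<in> A \<Longrightarrow> vanishes_to_order e (m i) (f i)"
  shows "vanishes_to_order e (\<Sum>i\<in>A. m i) (\<lambda>t. \<Prod>i\<in>A. f i t)"
  using assms
proof (induction A rule: infinite_finite_induct)
  case (insert x F)
  then show ?case
    by (simp add: vanishes_to_order_mult)
qed (simp_all add: vanishes_to_order_const)

lemma vanishes_to_order_3_imp_deriv_eq_0:
  assumes "vanishes_to_order e 3 f" "0 < e"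
  shows "deriv f 0 = 0" "deriv (deriv f) 0 = 0"
proof -
  obtain f' f'' where f: "\<forall>t\<in>{-e<..<e}. (f has_real_derivative f' t) (at t) \<and> (f' has_real_derivative f'' t) (at t)"
    and f0: "f' 0 = 0" "f'' 0 = 0"
    using assms(1) unfolding vanishes_to_order_def by auto
  have deriv_f: "deriv f t = f' t" if "t \<in> {-e<..<e}" for t
    using f that DERIV_imp_deriv by blast
  have "(deriv f has_real_derivative f'' 0) (at 0)"
    by (rule has_field_derivative_transform_within_open[of f' _ _ "{-e<..<e}"])
       (use f deriv_f assms(2) in auto)
  then show "deriv (deriv f) 0 = 0"
    using DERIV_imp_deriv f0 by metis
  show "deriv f 0 = 0"
    using deriv_f assms(2) f0 by simp
qed

lemma has_vector_derivative_if_has_derivative: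
  assumes "(g has_derivative g') F"
  shows "(g has_vector_derivative g' 1) F"
proof -
  have "g' t = t *\<^sub>R g' 1" for t
    using linear_scale[OF has_derivative_linear[OF assms], of t 1] by simp
  then have "g' = (\<lambda>t. t *\<^sub>R g' 1)"
    by (rule ext)
  with assms show ?thesis
    unfolding has_vector_derivative_def by (simp only:)
qed

lemma vanishes_to_order_bounded_linear_curve:
  assumes "smooth_on {-e<..<e} c" "bounded_linear L"
  shows "vanishes_to_order e (if L (c 0) = 0 then 1 else 0) (\<lambda>t. L (c t))"
proof -
  obtain D where D0: "\<forall>t\<in>{-e<..<e}. D [] t = c t"
    and D: "\<forall>vs. \<forall>t\<in>{-e<..<e}. (D vs has_derivative (\<lambda>v. D (v # vs) t)) (at t within {-e<..<e})"
    using assms(1) unfolding smooth_on_def by blast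
  have DL: "((\<lambda>t. L (D vs t)) has_real_derivative L (D (1 # vs) t)) (at t)"
    if t: "t \<in> {-e<..<e}" for vs t
  proof -
    have "at t within {-e<..<e} = at t"
      using t by (intro at_within_open) auto
    then have "(D vs has_derivative (\<lambda>v. D (v # vs) t)) (at t)"
      using D t by metis
    then show ?thesis
      unfolding has_real_derivative_iff_has_vector_derivative
      by (rule bounded_linear.has_vector_derivative[OF assms(2) has_vector_derivative_if_has_derivative])
  qed
  have Lc: "((\<lambda>t. L (c t)) has_real_derivative L (D [1] t)) (at t)" if t: "t \<in> {-e<..<e}" for t
  proof (rule has_field_derivative_transform_within_open[OF DL[OF t] _ t])
    show "L (D [] s) = L (c s)" if "s \<in> {-e<..<e}" for s
      using D0 that by simp
  qed simp
  show ?thesis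
    unfolding vanishes_to_order_def
    by (rule exI[of _ "\<lambda>t. L (D [1] t)"], rule exI[of _ "\<lambda>t. L (D [1, 1] t)"]) (simp add: Lc DL)
qed

lemma fs_mk_tensor: "fs (mk_tensor d n F) is = (if is \<in> multi_idx d n then F is else 0)"
  by (simp add: mk_tensor.rep_eq)

lemma supp_mk_tensor: "supp_fs (mk_tensor d n F) \<subseteq> multi_idx d n"
  by (auto simp: supp_fs_def fs_mk_tensor)

lemma outer_in_tensor_space: "outer d n u \<in> tensor_space d n"
  by (simp add: outer_def tensor_space_def supp_mk_tensor)

lemma lift_phi_in_tensor_space: "lift_phi d r n p \<in> tensor_space d n"
  by (simp add: lift_phi_def tensor_space_def supp_mk_tensor split: prod.split)

lemma multi_idx_Suc:
  "multi_idx (Suc d) n = (\<lambda>(is, a). is @ [a]) ` (multi_idx d n \<times> {..<n d})"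
proof
  show "multi_idx (Suc d) n \<subseteq> (\<lambda>(is, a). is @ [a]) ` (multi_idx d n \<times> {..<n d})"
  proof
    fix xs assume xs: "xs \<in> multi_idx (Suc d) n"
    then have "xs = take d xs @ [xs ! d]"
      using take_Suc_conv_app_nth[of d xs] by (simp add: multi_idx_def)
    moreover have "take d xs \<in> multi_idx d n" "xs ! d < n d"
      using xs by (auto simp: multi_idx_def)
    ultimately show "xs \<in> (\<lambda>(is, a). is @ [a]) ` (multi_idx d n \<times> {..<n d})"
      by (intro image_eqI[of _ _ "(take d xs, xs ! d)"]) auto
  qed
qed (auto simp: multi_idx_def nth_append less_Suc_eq)

lemma sum_multi_idx_prod:
  fixes F :: "nat \<Rightarrow> nat \<Rightarrow> 'a::comm_semiring_1"
  shows "(\<Sum>is\<in>multi_idx d n. \<Prod>j<d. F j (is ! j)) = (\<Prod>j<d. \<Sum>a<n j. F j a)"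
proof (induction d)
  case 0
  have "multi_idx 0 n = {[]}"
    by (auto simp: multi_idx_def)
  then show ?case by simp
next
  case (Suc d)
  have "inj_on (\<lambda>(is, a). is @ [a]) (multi_idx d n \<times> {..<n d})"
    by (auto simp: inj_on_def)
  then have "(\<Sum>is\<in>multi_idx (Suc d) n. \<Prod>j<Suc d. F j (is ! j))
      = (\<Sum>(is, a)\<in>multi_idx d n \<times> {..<n d}. \<Prod>j<Suc d. F j ((is @ [a]) ! j))"
    unfolding multi_idx_Suc by (subst sum.reindex) (simp_all add: case_prod_beta)
  also have "\<dots> = (\<Sum>(is, a)\<in>multi_idx d n \<times> {..<n d}. (\<Prod>j<d. F j (is ! j)) * F d a)"
    by (intro sum.cong refl) (auto simp: multi_idx_def nth_append)
  also have "\<dots> = (\<Sum>is\<in>multi_idx d n. \<Sum>a<n d. (\<Prod>j<d. F j (is ! j)) * F d a)"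
    by (simp add: sum.cartesian_product)
  also have "\<dots> = (\<Sum>is\<in>multi_idx d n. \<Prod>j<d. F j (is ! j)) * (\<Sum>a<n d. F d a)"
    by (rule sum_product[symmetric])
  finally show ?case
    by (simp add: Suc.IH)
qed

lemma inner_outer_outer:
  assumes "\<forall>j<d. u j \<in> Rn (n j)"
  shows "inner (outer d n u) (outer d n v) = (\<Prod>j<d. inner (u j) (v j))"
proof -
  have "inner (outer d n u) (outer d n v) = (\<Sum>is\<in>multi_idx d n. fs (outer d n u) is * fs (outer d n v) is)"
    unfolding outer_def by (rule inner_fsupp_sup[OF finite_multi_idx supp_mk_tensor])
  also have "\<dots> = (\<Sum>is\<in>multi_idx d n. \<Prod>j<d. fs (u j) (is ! j) * fs (v j) (is ! j))"
    by (simp add: outer_def fs_mk_tensor prod.distrib)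
  also have "\<dots> = (\<Prod>j<d. \<Sum>a<n j. fs (u j) a * fs (v j) a)"
    by (rule sum_multi_idx_prod)
  also have "\<dots> = (\<Prod>j<d. inner (u j) (v j))"
    using assms by (intro prod.cong refl inner_fsupp_sup[symmetric]) (auto simp: Rn_def)
  finally show ?thesis .
qed

lemma lift_phi_eq_sum_outer:
  "lift_phi d r n (l, Y) = (\<Sum>i<r. fs l i *\<^sub>R outer d n (\<lambda>j. column Y j i))"
  by (rule fs_eqI) (simp add: lift_phi_def outer_def fs_mk_tensor fs_sum column.rep_eq)

lemma inner_outer_lift_phi:
  assumes "\<forall>j<d. u j \<in> Rn (n j)"
  shows "inner (outer d n u) (lift_phi d r n p) =
    (\<Sum>i<r. fs (fst p) i * (\<Prod>j<d. inner (u j) (column (snd p) j i)))"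
  by (cases p) (simp add: lift_phi_eq_sum_outer inner_sum_right inner_outer_outer[OF assms])

lemma subspace_orth_compl: "subspace W \<Longrightarrow> subspace (orth_compl W S)"
  by (auto simp: subspace_def orth_compl_def inner_add_left)

lemma orth_compl_subset_dual_cone: "orth_compl W K \<subseteq> dual_cone W K"
  by (auto simp: orth_compl_def dual_cone_def)

lemma span_subset_dual_cone:
  assumes "subspace W" "S \<subseteq> dual_cone W K" "\<And>s. s \<in> S \<Longrightarrow> - s \<in> S"
  shows "span S \<subseteq> dual_cone W K"
proof -
  have "S \<subseteq> orth_compl W K"
  proof
    fix s assume "s \<in> S"
    then have "s \<in> dual_cone W K" "- s \<in> dual_cone W K"
      using assms(2,3) by auto
    then show "s \<in> orth_compl W K"
      by (force simp: dual_cone_def orth_compl_def)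
  qed
  then have "span S \<subseteq> orth_compl W K"
    by (rule span_minimal[OF _ subspace_orth_compl[OF assms(1)]])
  then show ?thesis
    using orth_compl_subset_dual_cone by blast
qed

lemma outer_uminus_first_factor:
  assumes "0 < d"
  shows "outer d n (u(0 := - u 0)) = - outer d n u"
proof (rule fs_eqI)
  fix xs
  obtain d' where d: "d = Suc d'"
    using assms gr0_conv_Suc by blast
  have "(\<Prod>j<d. fs ((u(0 := - u 0)) j) (xs ! j)) = - (\<Prod>j<d. fs (u j) (xs ! j))"
    unfolding d prod.lessThan_Suc_shift by simp
  then show "fs (outer d n (u(0 := - u 0))) xs = fs (- outer d n u) xs"
    by (simp add: outer_def fs_mk_tensor)
qed

lemma ex_outer_notin_dual_cone:
  assumes "0 < d" "\<not> tensor_of_complements d r n Y \<subseteq> dual_cone (tensor_space d n) K"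
  shows "\<exists>u. (\<forall>j<d. u j \<in> orth_compl (Rn (n j)) (col_space r Y j)) \<and>
    outer d n u \<notin> dual_cone (tensor_space d n) K"
proof (rule ccontr)
  define S where "S = {outer d n u | u. \<forall>j<d. u j \<in> orth_compl (Rn (n j)) (col_space r Y j)}"
  assume "\<nexists>u. (\<forall>j<d. u j \<in> orth_compl (Rn (n j)) (col_space r Y j)) \<and>
    outer d n u \<notin> dual_cone (tensor_space d n) K"
  then have "S \<subseteq> dual_cone (tensor_space d n) K"
    by (auto simp: S_def)
  moreover have "- s \<in> S" if "s \<in> S" for s
  proof -
    obtain u where u: "\<forall>j<d. u j \<in> orth_compl (Rn (n j)) (col_space r Y j)" and s: "s = outer d n u"
      using \<open>s \<in> S\<close> by (auto simp: S_def)
    have "\<forall>j<d. (u(0 := - u 0)) j \<in> orth_compl (Rn (n j)) (col_space r Y j)"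
      using u subspace_neg[OF subspace_orth_compl[OF subspace_Rn]] by simp
    then show ?thesis
      unfolding S_def s outer_uminus_first_factor[OF assms(1), symmetric] by blast
  qed
  ultimately have "span S \<subseteq> dual_cone (tensor_space d n) K"
    by (rule span_subset_dual_cone[OF subspace_tensor_space])
  with assms(2) show False
    by (simp add: tensor_of_complements_def S_def)
qed

lemma twice_differentiable_on_inner: "twice_differentiable_on W (inner a)"
  unfolding twice_differentiable_on_def
  by (rule exI[of _ "\<lambda>x. inner a"], rule exI[of _ "\<lambda>x v w. 0"])
     (simp add: bounded_linear_imp_has_derivative bounded_linear_inner_right)

lemma has_derivative_inner_unique_within_subspace:
  assumes "subspace W" "x \<in> W" "a \<in> W" "b \<in> W"
    and "(inner a has_derivative inner b) (at x within W)"
  shows "b = a"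
proof -
  define v where "v = b - a"
  define \<gamma> where "\<gamma> s = x + s *\<^sub>R v" for s :: real
  have \<gamma>': "(\<gamma> has_derivative (\<lambda>s. s *\<^sub>R v)) (at 0)"
    unfolding \<gamma>_def by (auto intro!: derivative_eq_intros)
  have "v \<in> W"
    using assms(1,3,4) by (simp add: v_def subspace_diff)
  then have "range \<gamma> \<subseteq> W"
    using assms(1,2) by (auto simp: \<gamma>_def intro: subspace_add subspace_scale)
  then have "(inner a has_derivative inner b) (at (\<gamma> 0) within range \<gamma>)"
    using assms(5) by (simp add: \<gamma>_def has_derivative_subset)
  then have "(inner a \<circ> \<gamma> has_derivative inner b \<circ> (\<lambda>s. s *\<^sub>R v)) (at 0)"
    by (rule diff_chain_within[OF \<gamma>'])
  moreover have "(inner a \<circ> \<gamma> has_derivative inner a \<circ> (\<lambda>s. s *\<^sub>R v)) (at 0)"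
    by (rule diff_chain_at[OF \<gamma>' bounded_linear_imp_has_derivative[OF bounded_linear_inner_right]])
  ultimately have "inner b \<circ> (\<lambda>s. s *\<^sub>R v) = inner a \<circ> (\<lambda>s. s *\<^sub>R v)"
    by (rule has_derivative_unique)
  then have "inner b v = inner a v"
    by (metis comp_apply scaleR_one)
  then have "inner v v = 0"
    by (simp add: v_def inner_diff_left)
  then show ?thesis
    by (simp add: v_def)
qed

lemma stationary_point_inner_iff:
  assumes "subspace W" "x \<in> W" "a \<in> W"
  shows "stationary_point W A (inner a) x \<longleftrightarrow> a \<in> dual_cone W (tangent_cone A x)"
  using has_derivative_inner_unique_within_subspace[OF assms] assms(3)
  unfolding stationary_point_def
  by (metis bounded_linear_imp_has_derivative bounded_linear_inner_right)

lemma vanishes_to_order_3_lift_phi_summand: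
  assumes c: "smooth_on {-e<..<e} c" "c 0 = (lam, Y)"
    and u: "\<forall>j<d. u j \<in> orth_compl (Rn (n j)) (col_space r Y j)"
    and order: "3 \<le> d \<or> (d = 2 \<and> lam = 0)" and "i < r"
  shows "vanishes_to_order e 3 (\<lambda>t. fs (fst (c t)) i * (\<Prod>j<d. inner (u j) (column (snd (c t)) j i)))"
proof -
  have "column Y j i \<in> col_space r Y j" for j
    unfolding col_space_def using \<open>i < r\<close> by (intro span_base) blast
  then have "inner (u j) (column Y j i) = 0" if "j < d" for j
    using u that by (simp add: orth_compl_def)
  then have "vanishes_to_order e 1 (\<lambda>t. inner (u j) (column (snd (c t)) j i))" if "j < d" for j
    using vanishes_to_order_bounded_linear_curve[OF c(1)
        bounded_linear_compose[OF bounded_linear_inner_column[of "u j" j i] bounded_linear_snd]] c(2) that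
    by simp
  then have "vanishes_to_order e d (\<lambda>t. \<Prod>j<d. inner (u j) (column (snd (c t)) j i))"
    using vanishes_to_order_prod[of "{..<d}" e "\<lambda>_. 1"] by simp
  moreover have "vanishes_to_order e (if fs lam i = 0 then 1 else 0) (\<lambda>t. fs (fst (c t)) i)"
    using vanishes_to_order_bounded_linear_curve[OF c(1)
        bounded_linear_compose[OF bounded_linear_fs bounded_linear_fst]] c(2)
    by simp
  ultimately show ?thesis
    using vanishes_to_order_mono[OF vanishes_to_order_mult] order by fastforce
qed

lemma two_critical_inner_outer_lift_phi:
  assumes u: "\<forall>j<d. u j \<in> orth_compl (Rn (n j)) (col_space r Y j)"
    and order: "3 \<le> d \<or> (d = 2 \<and> lam = 0)"
  shows "two_critical M (inner (outer d n u) \<circ> lift_phi d r n) (lam, Y)"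
  unfolding two_critical_def
proof (intro allI impI)
  fix c assume "smooth_curve_in M c \<and> c 0 = (lam, Y)"
  then obtain e where e: "0 < e" and c: "smooth_on {-e<..<e} c" "c 0 = (lam, Y)"
    unfolding smooth_curve_in_def by blast
  have "\<forall>j<d. u j \<in> Rn (n j)"
    using u by (simp add: orth_compl_def)
  then have "inner (outer d n u) \<circ> lift_phi d r n \<circ> c =
      (\<lambda>t. \<Sum>i<r. fs (fst (c t)) i * (\<Prod>j<d. inner (u j) (column (snd (c t)) j i)))"
    by (simp add: fun_eq_iff inner_outer_lift_phi)
  then have "vanishes_to_order e 3 (inner (outer d n u) \<circ> lift_phi d r n \<circ> c)"
    using vanishes_to_order_sum[of "{..<r}" e 3] vanishes_to_order_3_lift_phi_summand[OF c u order]
    by simp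
  then show "deriv (inner (outer d n u) \<circ> lift_phi d r n \<circ> c) 0 = 0 \<and>
      0 \<le> deriv (deriv (inner (outer d n u) \<circ> lift_phi d r n \<circ> c)) 0"
    using vanishes_to_order_3_imp_deriv_eq_0 e by simp
qed

theorem proposition5p2:
  fixes d r :: nat and n :: "nat \<Rightarrow> nat" and M :: "param set"
    and lam :: "nat fsupp" and Y :: "(nat \<times> nat \<times> nat) fsupp"
  assumes "embedded_submanifold (param_space d r n) M"
    and "(lam, Y) \<in> M"
    and "\<not> tensor_of_complements d r n Y \<subseteq>
           dual_cone (tensor_space d n)
             (tangent_cone (lift_phi d r n ` M) (lift_phi d r n (lam, Y)))"
  shows "(d \<ge> 3 \<longrightarrow> \<not> two_implies_one M (lift_phi d r n) (tensor_space d n) (lam, Y)) \<and>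
         (d = 2 \<and> lam = 0 \<longrightarrow> \<not> two_implies_one M (lift_phi d r n) (tensor_space d n) (lam, Y))"
proof -
  have "\<not> two_implies_one M (lift_phi d r n) (tensor_space d n) (lam, Y)"
    if order: "3 \<le> d \<or> (d = 2 \<and> lam = 0)"
  proof
    assume two_implies_one: "two_implies_one M (lift_phi d r n) (tensor_space d n) (lam, Y)"
    obtain u where u: "\<forall>j<d. u j \<in> orth_compl (Rn (n j)) (col_space r Y j)"
      and not_dual: "outer d n u \<notin> dual_cone (tensor_space d n)
        (tangent_cone (lift_phi d r n ` M) (lift_phi d r n (lam, Y)))"
      using ex_outer_notin_dual_cone[OF _ assms(3)] order by auto
    have "stationary_point (tensor_space d n) (lift_phi d r n ` M) (inner (outer d n u))
        (lift_phi d r n (lam, Y))"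
      using two_implies_one twice_differentiable_on_inner two_critical_inner_outer_lift_phi[OF u order]
      unfolding two_implies_one_def by blast
    with not_dual show False
      by (simp add: stationary_point_inner_iff subspace_tensor_space lift_phi_in_tensor_space
          outer_in_tensor_space)
  qed
  then show ?thesis
    by auto
qed

end
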